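(* Let $a,b,d>0$, $c>c_-$, and $\phi(x)=\frac{ax^3+bx^2+cx+d}{x^3}$, $x>0$. If $p$ is a prime period two solution of $\phi$ (i.e. $\phi(\phi(p))=p$ and $\phi(p)\neq p$), then $p$ is a zero of the sixth order polynomial $$G(x)=a^3x^6+(2a^2b-ac-d)x^5+(ab^2-ad-bc+2a^2c)x^4+(2a^2d+2abc-c^2-bd)x^3+(ac^2+2abd-2cd)x^2+(2acd-d^2)x+ad^2.$$ Consequently $\phi$ has at most three $2$-cycles.
   Context: $c_-$ is the unique negative zero of $Q(x)=4ax^3-b^2x^2-18abd\,x+27a^2d^2+4db^3$. A 2-cycle of $\phi$ is a pair $(p,\phi(p))$ where $p$ is a prime period two solution. *)

theory Defs
  imports Complex_Main
begin

definition Qpoly :: "real \<Rightarrow> real \<Rightarrow> real \<Rightarrow> real \<Rightarrow> real" where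
  "Qpoly a b d x = 4*a*x^3 - b^2*x^2 - 18*a*b*d*x + 27*a^2*d^2 + 4*d*b^3"

definition c_minus :: "real \<Rightarrow> real \<Rightarrow> real \<Rightarrow> real" where
  "c_minus a b d = (THE x. x < 0 \<and> Qpoly a b d x = 0)"

definition phi :: "real \<Rightarrow> real \<Rightarrow> real \<Rightarrow> real \<Rightarrow> real \<Rightarrow> real" where
  "phi a b c d x = (a*x^3 + b*x^2 + c*x + d) / x^3"

text \<open>p is a prime period two solution of phi (phi is defined on x > 0).\<close>
definition prime_period_two :: "(real \<Rightarrow> real) \<Rightarrow> real \<Rightarrow> bool" where
  "prime_period_two f p \<longleftrightarrow> p > 0 \<and> f p > 0 \<and> f (f p) = p \<and> f p \<noteq> p"

definition two_cycles :: "(real \<Rightarrow> real) \<Rightarrow> real set set" where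
  "two_cycles f = {{p, f p} | p. prime_period_two f p}"

definition Gpoly :: "real \<Rightarrow> real \<Rightarrow> real \<Rightarrow> real \<Rightarrow> real \<Rightarrow> real" where
  "Gpoly a b c d x = a^3*x^6 + (2*a^2*b - a*c - d)*x^5 + (a*b^2 - a*d - b*c + 2*a^2*c)*x^4
     + (2*a^2*d + 2*a*b*c - c^2 - b*d)*x^3 + (a*c^2 + 2*a*b*d - 2*c*d)*x^2
     + (2*a*c*d - d^2)*x + a*d^2"

end

theory Submission
  imports Defs "HOL-Computational_Algebra.Polynomial"
begin

text \<open>Write \<open>N = a p\<^sup>3 + b p\<^sup>2 + c p + d\<close>, so that \<open>q = \<phi> p = N / p\<^sup>3\<close>. Clearing
  denominators in \<open>\<phi> q = p\<close> gives a polynomial equation of degree 10 in \<open>p\<close>, which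
  factors as \<open>(p\<^sup>4 - N) G(p)\<close>; the first factor equals \<open>p\<^sup>3 (p - q)\<close>, and it vanishes
  exactly at the fixed points. Hence every prime period two point is a root of the
  sextic \<open>G\<close>. The two points of a 2-cycle are distinct roots of \<open>G\<close> and distinct
  2-cycles are disjoint, so there are at most \<open>6 / 2 = 3\<close> of them.\<close>

lemma phi_eq_iff:
  fixes x :: real
  assumes "x > 0"
  shows "phi a b c d x = y \<longleftrightarrow> a*x^3 + b*x^2 + c*x + d = y * x^3"
  using assms unfolding phi_def by (auto simp: field_simps)

lemma second_iterate_factorization:
  fixes a b c d p :: real
  defines "N \<equiv> a*p^3 + b*p^2 + c*p + d"
  shows "N^3 * (p - a) - b*N^2*p^3 - c*N*p^6 - d*p^9 = (p^4 - N) * Gpoly a b c d p"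
  unfolding N_def Gpoly_def by algebra

lemma Gpoly_eq_0_if_prime_period_two:
  fixes a b c d p :: real
  assumes "prime_period_two (phi a b c d) p"
  shows "Gpoly a b c d p = 0"
proof -
  define q where "q = phi a b c d p"
  define N where "N = a*p^3 + b*p^2 + c*p + d"
  have p: "p > 0" and q: "q > 0" and "phi a b c d q = p" and "q \<noteq> p"
    using assms unfolding prime_period_two_def q_def by auto
  have N: "N = q * p^3"
    using phi_eq_iff[OF p, of a b c d q] q_def unfolding N_def by simp
  have "a*q^3 + b*q^2 + c*q + d = p * q^3"
    using phi_eq_iff[OF q] \<open>phi a b c d q = p\<close> by simp
  moreover have "a*N^3 + b*N^2*p^3 + c*N*p^6 + d*p^9 - p*N^3
      = p^9 * (a*q^3 + b*q^2 + c*q + d - p*q^3)"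
    unfolding N by algebra
  ultimately have "N^3 * (p - a) - b*N^2*p^3 - c*N*p^6 - d*p^9 = 0"
    by (simp add: algebra_simps)
  then have "(p^4 - N) * Gpoly a b c d p = 0"
    unfolding N_def second_iterate_factorization .
  moreover have "p^4 - N = p^3 * (p - q)"
    unfolding N by (simp add: algebra_simps eval_nat_numeral)
  then have "p^4 - N \<noteq> 0"
    using p \<open>q \<noteq> p\<close> by simp
  ultimately show ?thesis
    by simp
qed

definition G_poly :: "real \<Rightarrow> real \<Rightarrow> real \<Rightarrow> real \<Rightarrow> real poly" where
  "G_poly a b c d = [:a*d^2, 2*a*c*d - d^2, a*c^2 + 2*a*b*d - 2*c*d,
     2*a^2*d + 2*a*b*c - c^2 - b*d, a*b^2 - a*d - b*c + 2*a^2*c, 2*a^2*b - a*c - d, a^3:]"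

lemma poly_G_poly: "poly (G_poly a b c d) x = Gpoly a b c d x"
  unfolding G_poly_def Gpoly_def by (simp add: algebra_simps eval_nat_numeral)

lemma degree_G_poly: "a \<noteq> 0 \<Longrightarrow> degree (G_poly a b c d) = 6"
  unfolding G_poly_def by simp

lemma finite_Gpoly_roots:
  fixes a :: real
  assumes "a \<noteq> 0"
  shows "finite {x. Gpoly a b c d x = 0}" and "card {x. Gpoly a b c d x = 0} \<le> 6"
proof -
  have "G_poly a b c d \<noteq> 0"
    using degree_G_poly[OF assms, of b c d] by auto
  moreover have "{x. Gpoly a b c d x = 0} = {x. poly (G_poly a b c d) x = 0}"
    by (simp add: poly_G_poly)
  ultimately show "finite {x. Gpoly a b c d x = 0}" and "card {x. Gpoly a b c d x = 0} \<le> 6"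
    using poly_roots_finite[of "G_poly a b c d"] card_poly_roots_bound[of "G_poly a b c d"]
      degree_G_poly[OF assms, of b c d]
    by simp_all
qed

lemma two_cycle_eq_if_mem:
  assumes "prime_period_two f p" "x \<in> {p, f p}"
  shows "{p, f p} = {x, f x}"
  using assms unfolding prime_period_two_def by auto

lemma card_two_cycles_le:
  assumes "finite R" and R: "\<And>p. prime_period_two f p \<Longrightarrow> p \<in> R"
  shows "finite (two_cycles f)" and "2 * card (two_cycles f) \<le> card R"
proof -
  let ?C = "two_cycles f"
  have C: "\<exists>p. A = {p, f p} \<and> prime_period_two f p" if "A \<in> ?C" for A
    using that unfolding two_cycles_def by blast
  have "prime_period_two f (f p)" if "prime_period_two f p" for p
    using that unfolding prime_period_two_def by auto
  then have sub: "?C \<subseteq> Pow R"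
    using C R by blast
  then show "finite ?C"
    using \<open>finite R\<close> by (meson finite_Pow_iff finite_subset)
  have card2: "card A = 2" if "A \<in> ?C" for A
    using C[OF that] unfolding prime_period_two_def by auto
  have "A \<inter> B = {}" if "A \<in> ?C" "B \<in> ?C" "A \<noteq> B" for A B
  proof -
    obtain p r where "A = {p, f p}" "prime_period_two f p" "B = {r, f r}" "prime_period_two f r"
      using C \<open>A \<in> ?C\<close> \<open>B \<in> ?C\<close> by blast
    then show ?thesis
      using two_cycle_eq_if_mem[of f p] two_cycle_eq_if_mem[of f r] \<open>A \<noteq> B\<close> by blast
  qed
  then have "pairwise disjnt ?C"
    unfolding pairwise_def disjnt_def by blast
  moreover have "finite A" if "A \<in> ?C" for A
    using that sub \<open>finite R\<close> by (meson PowD finite_subset subsetD)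
  ultimately have "card (\<Union>?C) = sum card ?C"
    by (rule card_Union_disjoint)
  also have "\<dots> = 2 * card ?C"
    using card2 by simp
  finally have "card (\<Union>?C) = 2 * card ?C" .
  moreover have "card (\<Union>?C) \<le> card R"
    using sub \<open>finite R\<close> by (intro card_mono) auto
  ultimately show "2 * card ?C \<le> card R"
    by simp
qed

theorem lemma1:
  fixes a b c d :: real
  assumes "a > 0" "b > 0" "d > 0" "c > c_minus a b d"
  shows "(\<forall>p. prime_period_two (phi a b c d) p \<longrightarrow> Gpoly a b c d p = 0)
         \<and> finite (two_cycles (phi a b c d)) \<and> card (two_cycles (phi a b c d)) \<le> 3"
proof -
  let ?R = "{x. Gpoly a b c d x = 0}"
  have roots: "\<forall>p. prime_period_two (phi a b c d) p \<longrightarrow> Gpoly a b c d p = 0"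
    using Gpoly_eq_0_if_prime_period_two by blast
  have "a \<noteq> 0"
    using assms(1) by simp
  note R = finite_Gpoly_roots[OF this, of b c d]
  have "2 * card (two_cycles (phi a b c d)) \<le> card ?R"
    and "finite (two_cycles (phi a b c d))"
    using card_two_cycles_le[OF R(1)] roots by auto
  then have "card (two_cycles (phi a b c d)) \<le> 3"
    using R(2) by linarith
  then show ?thesis
    using roots \<open>finite (two_cycles (phi a b c d))\<close> by blast
qed

end
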